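(* Let $p\geq3$, $k\geq1$ be integers. There exists $\tilde\lambda_c=\tilde\lambda_c(p,k)$ such that for every $\lambda\geq\tilde\lambda_c$, $$\sup_{m\in[0,m_\lambda]}S_{p,k}(m,x_* )<0.$$
   Context: For $\lambda>0$: $m_\lambda=\min\left\{1,\left(\frac{(p-2)\sqrt p}{\lambda\sqrt{p-1}}\right)^{1/k}\right\}$; $m_*=m_*(\lambda)$ is the largest solution $m\in(0,1]$ of $\lambda m^k/\sqrt p=m^2/\sqrt{1-m^2}$; $x_*=\lambda m_*^k\left(\frac12-\frac1k\right)-\sqrt{\frac{\lambda^2m_*^{2k}}{4}+p}$. $I_1(z)=\int_{\sqrt2}^z\sqrt{t^2-2}\,dt$ for $z\ge\sqrt2$, $I_1(z)=+\infty$ for $z<\sqrt2$; $\tilde S_{p,k}(m,y)=\tfrac12\log((1-m^2)(p-1))+\tfrac{2-p}{2p}y^2-\tfrac{\lambda m^k}{p}\sqrt{\tfrac{2(p-1)}{p}}\,y-\tfrac{\lambda^2m^{2k-2}}{2p^2}(p+(1-p)m^2)-I_1(-y)$; $y(x,m)=\frac{px-(1-p/k)\lambda m^k}{\sqrt{2p(p-1)}}$; $S_{p,k}(m,x)=\tilde S_{p,k}(m,y(x,m))$. *)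

theory Defs
  imports "HOL-Analysis.Analysis" "HOL-Library.Extended_Real"
begin

definition m_lambda :: "nat \<Rightarrow> nat \<Rightarrow> real \<Rightarrow> real" where
  "m_lambda p k lam = min 1 (root k ((real p - 2) * sqrt (real p) / (lam * sqrt (real p - 1))))"

definition m_star :: "nat \<Rightarrow> nat \<Rightarrow> real \<Rightarrow> real" where
  "m_star p k lam = (GREATEST m. 0 < m \<and> m \<le> 1 \<and>
      lam * m ^ k / sqrt (real p) = m\<^sup>2 / sqrt (1 - m\<^sup>2))"

definition x_star :: "nat \<Rightarrow> nat \<Rightarrow> real \<Rightarrow> real" where
  "x_star p k lam = (let ms = m_star p k lam in
      lam * ms ^ k * (1/2 - 1 / real k) - sqrt (lam\<^sup>2 * ms ^ (2*k) / 4 + real p))"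

definition I1 :: "real \<Rightarrow> ereal" where
  "I1 z = (if sqrt 2 \<le> z then ereal (integral {sqrt 2..z} (\<lambda>t. sqrt (t\<^sup>2 - 2))) else \<infinity>)"

definition S_tilde :: "nat \<Rightarrow> nat \<Rightarrow> real \<Rightarrow> real \<Rightarrow> real \<Rightarrow> ereal" where
  "S_tilde p k lam m y =
     ereal (ln ((1 - m\<^sup>2) * (real p - 1)) / 2
        + (2 - real p) / (2 * real p) * y\<^sup>2
        - lam * m ^ k / real p * sqrt (2 * (real p - 1) / real p) * y
        - lam\<^sup>2 * m ^ (2*k - 2) / (2 * (real p)\<^sup>2) * (real p + (1 - real p) * m\<^sup>2))
     - I1 (- y)"

definition y_fun :: "nat \<Rightarrow> nat \<Rightarrow> real \<Rightarrow> real \<Rightarrow> real \<Rightarrow> real" where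
  "y_fun p k lam x m = (real p * x - (1 - real p / real k) * lam * m ^ k)
      / sqrt (2 * real p * (real p - 1))"

definition S_pk :: "nat \<Rightarrow> nat \<Rightarrow> real \<Rightarrow> real \<Rightarrow> real \<Rightarrow> ereal" where
  "S_pk p k lam m x = S_tilde p k lam m (y_fun p k lam x m)"

end

theory Submission
  imports Defs "HOL-Real_Asymp.Real_Asymp"
begin

(* For large lambda the defining equation of m_* has a root in [1/2, 1), so A = lambda m_*^k
   grows at least like lambda / 2^k, and x_* <= -A/k.  On [0, m_lambda] the product lambda m^k
   stays below a constant depending only on p, so y(x_*, m) <= -(p/k) A / sqrt (2p(p-1)) + O(1)
   uniformly in m.  Dropping the nonnegative term I_1 and bounding the logarithm by p/2, S_{p,k}
   is at most a quadratic in y with leading coefficient -(p-2)/(2p) < 0, hence below -1 once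
   y is negative enough. *)

lemma obtain_greatest_zero:
  fixes g :: "real \<Rightarrow> real"
  assumes "0 \<le> g a" "g b \<le> 0" "continuous_on {a..b} g" "a \<le> b"
  obtains z where "z \<in> {a..b}" "g z = 0" "\<And>t. t \<in> {a..b} \<Longrightarrow> g t = 0 \<Longrightarrow> t \<le> z"
proof -
  let ?Z = "{t \<in> {a..b}. g t = 0}"
  have "closed ?Z" using continuous_closed_preimage_constant[OF assms(3)] by simp
  moreover have "bounded ?Z" by (rule bounded_subset[of "{a..b}"]) auto
  ultimately have "compact ?Z" by (simp add: compact_eq_bounded_closed)
  moreover have "?Z \<noteq> {}"
    using IVT2'[of g b 0 a] assms by auto
  ultimately obtain z where "z \<in> ?Z" "\<forall>t \<in> ?Z. t \<le> z"
    using compact_attains_sup by blast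
  then show thesis using that by blast
qed

lemma m_star_ge_half:
  assumes "p \<ge> 1" and lam: "2 ^ k * sqrt (real p) \<le> lam"
  shows "1/2 \<le> m_star p k lam"
proof -
  have sp: "sqrt (real p) > 0" using assms(1) by simp
  have "0 < 2 ^ k * sqrt (real p)" using sp by simp
  then have lam0: "lam > 0" using lam by linarith
  define g where "g m = lam * m ^ k * sqrt (1 - m\<^sup>2) - sqrt (real p) * m\<^sup>2" for m :: real
  let ?P = "\<lambda>m. 0 < m \<and> m \<le> 1 \<and> lam * m ^ k / sqrt (real p) = m\<^sup>2 / sqrt (1 - m\<^sup>2)"
  have P_iff_root: "?P m \<longleftrightarrow> g m = 0" if "0 < m" "m < 1" for m
  proof -
    have "m\<^sup>2 < 1" using that by (simp add: power_less_one_iff abs_square_less_1)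
    then have "sqrt (1 - m\<^sup>2) > 0" by simp
    then show ?thesis using that sp by (auto simp: g_def field_simps)
  qed
  \<comment> \<open>At m = 1 the right-hand side is 1 / sqrt 0 = 0, which would force lam = 0.\<close>
  have not_P1: "\<not> ?P 1" using lam0 sp by simp
  have "sqrt (real p) / 4 \<le> lam / 2 ^ k * sqrt (1 - (1/2)\<^sup>2)"
  proof -
    have "sqrt (real p) / 2 \<le> lam / 2 ^ k" using lam lam0 by (simp add: field_simps)
    moreover have "1/2 \<le> sqrt (1 - (1/2::real)\<^sup>2)" by (rule real_le_rsqrt) (simp add: power2_eq_square)
    ultimately have "sqrt (real p) / 2 * (1/2) \<le> lam / 2 ^ k * sqrt (1 - (1/2)\<^sup>2)"
      using lam0 by (intro mult_mono) auto
    then show ?thesis by simp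
  qed
  then have "0 \<le> g (1/2)" by (simp add: g_def power_divide)
  moreover have "g 1 \<le> 0" using sp by (simp add: g_def)
  moreover have "continuous_on {1/2..1} g" unfolding g_def by (intro continuous_intros)
  ultimately obtain z where z: "z \<in> {1/2..1}" "g z = 0"
    and z_greatest: "\<And>t. t \<in> {1/2..1} \<Longrightarrow> g t = 0 \<Longrightarrow> t \<le> z"
    by (rule obtain_greatest_zero) auto
  have "z \<noteq> 1" using z sp by (auto simp: g_def)
  then have "?P z" using P_iff_root z by auto
  moreover have "t \<le> z" if "?P t" for t
  proof (cases "t < 1/2")
    case True
    then show ?thesis using z by simp
  next
    case False
    then have t: "t \<in> {1/2..1}" "t \<noteq> 1" using that not_P1 by auto
    then have "g t = 0" using that P_iff_root[of t] by auto
    then show ?thesis using t z_greatest by blast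
  qed
  ultimately have "m_star p k lam = z" unfolding m_star_def by (intro Greatest_equality)
  then show ?thesis using z by simp
qed

lemma x_star_le:
  assumes "0 \<le> lam * m_star p k lam ^ k"
  shows "x_star p k lam \<le> - (lam * m_star p k lam ^ k) / real k"
proof -
  define A where "A = lam * m_star p k lam ^ k"
  have "x_star p k lam = A * (1/2 - 1 / real k) - sqrt (A\<^sup>2 / 4 + real p)"
    unfolding x_star_def A_def Let_def
    by (simp add: power_mult_distrib power_mult[symmetric] mult.commute)
  also have "\<dots> \<le> A * (1/2 - 1 / real k) - A / 2"
  proof -
    have "A / 2 = sqrt (A\<^sup>2 / 4)" using assms by (simp add: A_def real_sqrt_divide)
    also have "\<dots> \<le> sqrt (A\<^sup>2 / 4 + real p)" by simp
    finally show ?thesis by linarith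
  qed
  also have "\<dots> = - A / real k" by (simp add: algebra_simps)
  finally show ?thesis unfolding A_def .
qed

lemma m_lambda_bound:
  assumes "p \<ge> 2" "k \<ge> 1" "lam > 0" "0 \<le> m" "m \<le> m_lambda p k lam"
  shows "m \<le> 1" and "lam * m ^ k \<le> (real p - 2) * sqrt (real p) / sqrt (real p - 1)"
proof -
  define q where "q = (real p - 2) * sqrt (real p) / (lam * sqrt (real p - 1))"
  have q0: "0 \<le> q" using assms(1,3) by (simp add: q_def)
  show "m \<le> 1" using assms(5) by (simp add: m_lambda_def)
  have "m ^ k \<le> root k q ^ k"
    using assms(4,5) by (intro power_mono) (simp_all add: m_lambda_def q_def)
  also have "\<dots> = q" using assms(2) q0 by simp
  finally have "lam * m ^ k \<le> lam * q" using assms(3) by simp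
  then show "lam * m ^ k \<le> (real p - 2) * sqrt (real p) / sqrt (real p - 1)"
    using assms(3) by (simp add: q_def)
qed

lemma I1_nonneg: "0 \<le> I1 z"
proof (cases "sqrt 2 \<le> z")
  case True
  have "continuous_on {sqrt 2..z} (\<lambda>t. sqrt (t\<^sup>2 - 2))" by (intro continuous_intros)
  then have "(\<lambda>t. sqrt (t\<^sup>2 - 2)) integrable_on {sqrt 2..z}" by (rule integrable_continuous_interval)
  then have "0 \<le> integral {sqrt 2..z} (\<lambda>t. sqrt (t\<^sup>2 - 2))"
    by (rule integral_nonneg) (auto intro: sqrt_le_D)
  then show ?thesis using True by (simp add: I1_def)
qed (simp add: I1_def)

lemma ln_le_self: "0 \<le> x \<Longrightarrow> ln x \<le> (x::real)"
  by (cases "x = 0") (simp_all add: less_imp_le)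

lemma S_tilde_le:
  assumes "p \<ge> 1" "0 \<le> m" "m \<le> 1" "0 \<le> lam * m ^ k" "lam * m ^ k \<le> C" "y \<le> 0"
  shows "S_tilde p k lam m y \<le> ereal (real p / 2 - (real p - 2) / (2 * real p) * y\<^sup>2
           - C * sqrt (2 * (real p - 1) / real p) / real p * y)"
proof -
  define c where "c = sqrt (2 * (real p - 1) / real p) / real p"
  have c0: "0 \<le> c" using assms(1) by (simp add: c_def)
  have m2: "m\<^sup>2 \<le> 1" using assms(2,3) by (simp add: power_le_one)
  have "ln ((1 - m\<^sup>2) * (real p - 1)) \<le> (1 - m\<^sup>2) * (real p - 1)"
    using m2 assms(1) by (intro ln_le_self) simp
  also have "\<dots> \<le> 1 * (real p - 1)" using m2 assms(1,2) by (intro mult_right_mono) auto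
  finally have ln_part: "ln ((1 - m\<^sup>2) * (real p - 1)) / 2 \<le> real p / 2" by simp
  have "lam * m ^ k * c * (- y) \<le> C * c * (- y)"
    using assms(5,6) c0 by (intro mult_right_mono) auto
  then have linear_part: "- (lam * m ^ k / real p * sqrt (2 * (real p - 1) / real p) * y) \<le> - (C * c * y)"
    by (simp add: c_def)
  have "(real p - 1) * m\<^sup>2 \<le> (real p - 1) * 1" using m2 assms(1) by (intro mult_left_mono) auto
  then have "0 \<le> real p + (1 - real p) * m\<^sup>2" by (simp add: algebra_simps)
  then have quad_part: "0 \<le> lam\<^sup>2 * m ^ (2*k - 2) / (2 * (real p)\<^sup>2) * (real p + (1 - real p) * m\<^sup>2)"
    using assms(2) by simp
  have "(2 - real p) / (2 * real p) * y\<^sup>2 = - ((real p - 2) / (2 * real p) * y\<^sup>2)"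
    by (metis minus_diff_eq minus_divide_left mult_minus_left)
  then have "ln ((1 - m\<^sup>2) * (real p - 1)) / 2 + (2 - real p) / (2 * real p) * y\<^sup>2
      - lam * m ^ k / real p * sqrt (2 * (real p - 1) / real p) * y
      - lam\<^sup>2 * m ^ (2*k - 2) / (2 * (real p)\<^sup>2) * (real p + (1 - real p) * m\<^sup>2)
    \<le> real p / 2 - (real p - 2) / (2 * real p) * y\<^sup>2 - C * sqrt (2 * (real p - 1) / real p) / real p * y"
    using ln_part linear_part quad_part by (simp add: c_def)
  then show ?thesis
    unfolding S_tilde_def by (intro ereal_diff_le_mono_left I1_nonneg) simp
qed

lemma y_fun_le:
  assumes "p \<ge> 2" "k \<ge> 1" "x \<le> - A / real k" "0 \<le> lam * m ^ k" "lam * m ^ k \<le> C"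
  shows "y_fun p k lam x m \<le> ((real p - 1) * C - real p * A / real k) / sqrt (2 * real p * (real p - 1))"
proof -
  have "real p * x \<le> - real p * A / real k" using assms(1,3) mult_left_mono[OF assms(3), of "real p"] by simp
  moreover have "(real p / real k - 1) * (lam * m ^ k) \<le> (real p - 1) * (lam * m ^ k)"
    using assms(1,2,4) by (intro mult_right_mono) (simp_all add: divide_le_eq)
  moreover have "(real p - 1) * (lam * m ^ k) \<le> (real p - 1) * C" using assms(1,5) by simp
  ultimately have "real p * x - (1 - real p / real k) * lam * m ^ k \<le> (real p - 1) * C - real p * A / real k"
    by (simp add: algebra_simps)
  then show ?thesis
    unfolding y_fun_def using assms(1) by (intro divide_right_mono) auto
qed

lemma eventually_neg_quadratic_le:
  fixes a b c d :: real
  assumes "a > 0"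
  shows "eventually (\<lambda>y. c - a * y\<^sup>2 - b * y \<le> d) at_bot"
  using assms by real_asymp

lemma lam_m_star_pow_ge:
  assumes "p \<ge> 1" "2 ^ k * sqrt (real p) \<le> lam"
  shows "lam / 2 ^ k \<le> lam * m_star p k lam ^ k"
proof -
  have "(1/2) ^ k \<le> m_star p k lam ^ k"
    using m_star_ge_half[OF assms] by (intro power_mono) auto
  moreover have "0 \<le> 2 ^ k * sqrt (real p)" by simp
  then have "0 \<le> lam" using assms(2) by linarith
  ultimately have "lam * (1/2) ^ k \<le> lam * m_star p k lam ^ k" by (rule mult_left_mono)
  then show ?thesis by (simp add: power_divide)
qed

lemma S_pk_x_star_le_if_large:
  assumes "p \<ge> 3" "k \<ge> 1"
  obtains T where "\<And>lam m. 0 < lam \<Longrightarrow> T \<le> lam * m_star p k lam ^ k \<Longrightarrow>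
      m \<in> {0..m_lambda p k lam} \<Longrightarrow> S_pk p k lam m (x_star p k lam) \<le> -1"
proof -
  define C where "C = (real p - 2) * sqrt (real p) / sqrt (real p - 1)"
  define D where "D = sqrt (2 * real p * (real p - 1))"
  have D0: "D > 0" using assms(1) by (simp add: D_def)
  have "eventually (\<lambda>y. real p / 2 - (real p - 2) / (2 * real p) * y\<^sup>2
      - C * sqrt (2 * (real p - 1) / real p) / real p * y \<le> -1) at_bot"
    by (rule eventually_neg_quadratic_le) (use assms(1) in simp)
  then obtain Y0 where Y0: "\<And>y. y \<le> Y0 \<Longrightarrow> real p / 2 - (real p - 2) / (2 * real p) * y\<^sup>2
      - C * sqrt (2 * (real p - 1) / real p) / real p * y \<le> -1"
    by (auto simp: eventually_at_bot_linorder)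
  define Y where "Y = min Y0 0"
  define T where "T = max 0 (real k * ((real p - 1) * C - Y * D) / real p)"
  show thesis
  proof (rule that)
    fix lam m assume lam: "0 < lam" and T: "T \<le> lam * m_star p k lam ^ k"
      and m: "m \<in> {0..m_lambda p k lam}"
    define A where "A = lam * m_star p k lam ^ k"
    have "0 \<le> A" using T by (simp add: A_def T_def)
    then have x_star: "x_star p k lam \<le> - A / real k" unfolding A_def by (rule x_star_le)
    have B0: "0 \<le> lam * m ^ k" using lam m by simp
    have m1: "m \<le> 1" and BC: "lam * m ^ k \<le> C"
      using m_lambda_bound[of p k lam m] assms lam m unfolding C_def by simp_all
    define y where "y = y_fun p k lam (x_star p k lam) m"
    have "y \<le> ((real p - 1) * C - real p * A / real k) / D"
      using y_fun_le[OF _ assms(2) x_star B0 BC] assms(1) unfolding y_def D_def by simp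
    also have "\<dots> \<le> Y"
    proof -
      have "real k * ((real p - 1) * C - Y * D) / real p \<le> A" using T by (simp add: A_def T_def)
      then have "(real p - 1) * C - Y * D \<le> real p * A / real k"
        using assms by (simp add: field_simps)
      then show ?thesis using D0 by (simp add: field_simps)
    qed
    finally have "y \<le> Y0" "y \<le> 0" by (auto simp: Y_def)
    have "S_pk p k lam m (x_star p k lam) = S_tilde p k lam m y" by (simp add: S_pk_def y_def)
    also have "\<dots> \<le> ereal (real p / 2 - (real p - 2) / (2 * real p) * y\<^sup>2
        - C * sqrt (2 * (real p - 1) / real p) / real p * y)"
      using S_tilde_le[OF _ _ m1 B0 BC \<open>y \<le> 0\<close>] assms(1) m by simp
    also have "\<dots> \<le> -1" using Y0[OF \<open>y \<le> Y0\<close>] by (simp add: one_ereal_def)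
    finally show "S_pk p k lam m (x_star p k lam) \<le> -1" .
  qed
qed

theorem proposition4p3:
  fixes p k :: nat
  assumes "p \<ge> 3" and "k \<ge> 1"
  shows "\<exists>lamc > 0. \<forall>lam \<ge> lamc.
           (SUP m \<in> {0..m_lambda p k lam}. S_pk p k lam m (x_star p k lam)) < 0"
proof -
  obtain T where T: "\<And>lam m. 0 < lam \<Longrightarrow> T \<le> lam * m_star p k lam ^ k \<Longrightarrow>
      m \<in> {0..m_lambda p k lam} \<Longrightarrow> S_pk p k lam m (x_star p k lam) \<le> -1"
    using S_pk_x_star_le_if_large[OF assms] by blast
  define lamc where "lamc = 2 ^ k * max (sqrt (real p)) T"
  have lamc0: "lamc > 0" using assms(1) by (simp add: lamc_def less_max_iff_disj)
  have "(SUP m \<in> {0..m_lambda p k lam}. S_pk p k lam m (x_star p k lam)) < 0"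
    if lam: "lam \<ge> lamc" for lam
  proof -
    have "2 ^ k * sqrt (real p) \<le> lamc" "2 ^ k * T \<le> lamc" by (simp_all add: lamc_def)
    then have "2 ^ k * sqrt (real p) \<le> lam" "T \<le> lam / 2 ^ k"
      using lam by (simp_all add: field_simps)
    then have "T \<le> lam * m_star p k lam ^ k"
      using lam_m_star_pow_ge[of p k lam] assms(1) by simp
    moreover have "0 < lam" using lam lamc0 by simp
    ultimately have "(SUP m \<in> {0..m_lambda p k lam}. S_pk p k lam m (x_star p k lam)) \<le> -1"
      using T by (intro SUP_least) simp
    then show ?thesis by (rule order.strict_trans1) simp
  qed
  then show ?thesis using lamc0 by blast
qed

end
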